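(* Let $(\vec X_1,Y_1),\ldots,(\vec X_n,Y_n),(\vec X'_1,Y'_1),\ldots,(\vec X'_n,Y'_n),(\vec X_{n+1},Y_{n+1})$ be i.i.d. random pairs with $\vec X\in\mathcal X$, $Y\in\mathbb R$, and let $F(y\mid\vec x)$ be the conditional distribution function of $Y$ given $\vec X=\vec x$. For each $n$ let $\widehat F=\widehat F_n$ be an estimate of $F$ computed only from $\mathbb D'=\{(\vec X'_i,Y'_i)\}_{i=1}^n$. Fix $\alpha\in(0,1)$, let $\mathcal T(\mathbb D)=\{\widehat F(Y_i\mid\vec X_i):i=1,\ldots,n\}$ and $$C_n(\vec x)=\left[\widehat F^{-1}\big(q(\alpha/2;\mathcal T(\mathbb D))\mid\vec x\big),\ \widehat F^{-1}\big(q(1-\alpha/2;\mathcal T(\mathbb D))\mid\vec x\big)\right].$$ Assume: (A1) there exist sequences $\eta_n=o(1)$ and $\rho_n=o(1)$ such that $\mathbb P\Big(\mathbb E\big[\sup_{y\in\mathbb R}(\widehat F(y\mid\vec X)-F(y\mid\vec X))^2\,\big|\,\widehat F\big]\ge\eta_n\Big)\le\rho_n$, where $\vec X$ is an independent copy of the features; (A2) for every $\vec x$, $F(y\mid\vec x)$ is differentiable in $y$, and there exists $M>0$ such that $\inf_{\vec x}\frac{dF(y\mid\vec x)}{dy}\ge M^{-1}$ for $y$ in a neighborhood of $F^{-1}(\alpha/2\mid\vec x)$ and of $F^{-1}(1-\alpha/2\mid\vec x)$. Let $C^*(\vec x)=[F^{-1}(\alpha/2\mid\vec x),\,F^{-1}(1-\alpha/2\mid\vec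 x)]$ be the oracle interval. Then $$\lambda\big(C_n(\vec X_{n+1})\,\Delta\,C^*(\vec X_{n+1})\big)=o_{\mathbb P}(1),$$ where $\lambda$ is Lebesgue measure and $\Delta$ is symmetric difference.
   Context: For a finite set of reals $\{t_1,\ldots,t_m\}$, $q(\beta;\{t_1,\ldots,t_m\})$ denotes its empirical $\beta$ quantile. $\widehat F^{-1}(\cdot\mid\vec x)$ and $F^{-1}(\cdot\mid\vec x)$ denote the (generalized) inverses of the distribution functions in $y$. *)

theory Defs
  imports "HOL-Probability.Probability"
begin

definition is_cdf :: "(real \<Rightarrow> real) \<Rightarrow> bool" where
  "is_cdf G \<longleftrightarrow> mono G \<and> (\<forall>y. continuous (at_right y) G)
      \<and> (G \<longlongrightarrow> 0) at_bot \<and> (G \<longlongrightarrow> 1) at_top"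

definition ginv :: "(real \<Rightarrow> real) \<Rightarrow> real \<Rightarrow> real" where
  "ginv G p = Inf {y. p \<le> G y}"

text \<open>Empirical beta-quantile of the values t i, i in the finite index set I
  (generalized inverse of the empirical distribution function).\<close>
definition emp_quantile :: "real \<Rightarrow> nat set \<Rightarrow> (nat \<Rightarrow> real) \<Rightarrow> real" where
  "emp_quantile \<beta> I t = Inf {s. \<beta> * real (card I) \<le> real (card {i\<in>I. t i \<le> s})}"

text \<open>F is (a version of) the conditional distribution function of Y given X = x,
  where P is the joint law of (X,Y) on Mx x borel.\<close>
definition cond_cdf :: "('a \<times> real) measure \<Rightarrow> 'a measure \<Rightarrow> ('a \<Rightarrow> real \<Rightarrow> real) \<Rightarrow> bool" where
  "cond_cdf P Mx F \<longleftrightarrow> (\<forall>x. is_cdf (F x)) \<and> (\<forall>y. (\<lambda>x. F x y) \<in> borel_measurable Mx)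
     \<and> (\<forall>A\<in>sets Mx. \<forall>y. measure P (A \<times> {..y}) = (\<integral>x. indicator A x * F x y \<partial>(distr P Mx fst)))"

definition symdiff :: "'a set \<Rightarrow> 'a set \<Rightarrow> 'a set" where
  "symdiff A B = (A - B) \<union> (B - A)"

end

(*
  Outside an event of vanishing probability three things happen at once.  By (A1) and Markov's
  inequality, applied conditionally on the independent training half, the estimate is uniformly
  c-close to F at the test feature, and all but a c/4 fraction of the calibration scores
  F-hat(Y_i | X_i) are c/2-close to the oracle scores F(Y_i | X_i).  The oracle scores are exactly
  uniform (probability integral transform), so by Hoeffding their empirical frequencies below
  beta +- c/2 are c/4-accurate.  Together these put the empirical beta-quantile of the scores
  within c of beta.  Since F(. | x) grows at rate at least 1/Mb near its beta-quantile, the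
  generalized inverse of a uniformly c-perturbed F, evaluated at a level c-close to beta, is
  within 2 c Mb of the oracle quantile.  Hence both endpoints converge in probability, and the
  symmetric difference of two intervals is no longer than the sum of the endpoint distances.
*)
theory Submission
  imports Defs
begin

section \<open>Distribution functions and their generalized inverses\<close>

lemma is_cdf_nonneg:
  assumes "is_cdf G" shows "0 \<le> G y"
proof -
  have "mono G" using assms by (simp add: is_cdf_def)
  have "eventually (\<lambda>t. G t \<le> G y) at_bot"
    using eventually_le_at_bot[of y] by eventually_elim (rule monoD[OF \<open>mono G\<close>])
  then show ?thesis
    using assms tendsto_upperbound[of G 0 at_bot] by (simp add: is_cdf_def)
qed

lemma is_cdf_le_one:
  assumes "is_cdf G" shows "G y \<le> 1"
proof -
  have "mono G" using assms by (simp add: is_cdf_def)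
  have "eventually (\<lambda>t. G y \<le> G t) at_top"
    using eventually_ge_at_top[of y] by eventually_elim (rule monoD[OF \<open>mono G\<close>])
  then show ?thesis
    using assms tendsto_lowerbound[of G 1 at_top] by (simp add: is_cdf_def)
qed

lemma bdd_below_cdf_superlevel:
  assumes "is_cdf G" "0 < p"
  shows "bdd_below {y. p \<le> G y}"
proof -
  obtain b where b: "\<And>t. t \<le> b \<Longrightarrow> G t < p"
    using order_tendstoD(2)[of G 0 at_bot p] assms
    by (auto simp: is_cdf_def eventually_at_bot_linorder)
  have "b \<le> y" if "p \<le> G y" for y
    using b[of y] that by (cases "y \<le> b") auto
  then show ?thesis by (auto simp: bdd_below_def)
qed

lemma cdf_superlevel_nonempty:
  assumes "is_cdf G" "p < 1"
  shows "{y. p \<le> G y} \<noteq> {}"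
proof -
  obtain y where "p < G y"
    using order_tendstoD(1)[of G 1 at_top p] assms
    by (auto simp: is_cdf_def eventually_at_top_linorder)
  then have "y \<in> {y. p \<le> G y}" by simp
  then show ?thesis by blast
qed

lemma le_cdf_ginv:
  assumes "is_cdf G" "0 < p" "p < 1"
  shows "p \<le> G (ginv G p)"
proof -
  let ?S = "{y. p \<le> G y}"
  have "eventually (\<lambda>t. p \<le> G t) (at_right (Inf ?S))"
    using eventually_at_right_less[of "Inf ?S"]
  proof eventually_elim
    case (elim t)
    then obtain s where "p \<le> G s" "s < t"
      using cInf_lessD[OF cdf_superlevel_nonempty[OF assms(1,3)]] by auto
    then show ?case
      using assms(1) by (auto simp: is_cdf_def dest: monoD[of G s t])
  qed
  moreover have "(G \<longlongrightarrow> G (Inf ?S)) (at_right (Inf ?S))"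
    using assms(1) by (simp add: is_cdf_def continuous_within)
  ultimately show ?thesis
    unfolding ginv_def using tendsto_lowerbound trivial_limit_at_right_real by blast
qed

lemma ginv_le_iff:
  assumes "is_cdf G" "0 < p" "p < 1"
  shows "ginv G p \<le> y \<longleftrightarrow> p \<le> G y"
proof
  assume "ginv G p \<le> y"
  then show "p \<le> G y"
    using le_cdf_ginv[OF assms] assms(1) by (auto simp: is_cdf_def dest: monoD)
next
  assume "p \<le> G y"
  then show "ginv G p \<le> y"
    unfolding ginv_def using bdd_below_cdf_superlevel[OF assms(1,2)] by (auto intro: cInf_lower)
qed

lemma cdf_ginv_eq:
  assumes "is_cdf G" "0 < p" "p < 1" "isCont G (ginv G p)"
  shows "G (ginv G p) = p"
proof -
  have "eventually (\<lambda>t. t < ginv G p) (at_left (ginv G p))"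
    by (simp add: eventually_at_filter)
  then have "eventually (\<lambda>t. G t \<le> p) (at_left (ginv G p))"
  proof eventually_elim
    case (elim t)
    then show ?case using ginv_le_iff[OF assms(1-3), of t] by linarith
  qed
  moreover have "(G \<longlongrightarrow> G (ginv G p)) (at_left (ginv G p))"
    using assms(4) by (simp add: filterlim_at_split isCont_def)
  ultimately have "G (ginv G p) \<le> p"
    using tendsto_upperbound trivial_limit_at_left_real by blast
  with le_cdf_ginv[OF assms(1-3)] show ?thesis by simp
qed

lemma ginv_perturb:
  fixes F G :: "real \<Rightarrow> real"
  assumes "mono F" and "F q = \<beta>" and "\<beta> + h/Mb \<le> F (q + h)" and "F (q - h) \<le> \<beta> - h/Mb"
    and "\<And>y. \<bar>G y - F y\<bar> \<le> e" and "\<bar>p - \<beta>\<bar> + e < h/Mb"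
  shows "\<bar>ginv G p - q\<bar> \<le> h"
proof -
  let ?S = "{y. p \<le> G y}"
  have in_S: "q + h \<in> ?S"
    using assms(5)[of "q + h"] assms(3,6) by (auto simp: abs_le_iff)
  have lower: "q - h \<le> y" if "y \<in> ?S" for y
  proof (rule ccontr)
    assume "\<not> q - h \<le> y"
    then have "F y \<le> F (q - h)" using monoD[OF assms(1)] by auto
    then show False using that assms(5)[of y] assms(4,6) by (auto simp: abs_le_iff)
  qed
  have "Inf ?S \<le> q + h"
    using in_S lower by (intro cInf_lower) (auto simp: bdd_below_def)
  moreover have "q - h \<le> Inf ?S"
    using in_S lower by (intro cInf_greatest) auto
  ultimately show ?thesis by (simp add: ginv_def abs_le_iff)
qed

lemma increment_ge_of_deriv_ge:
  fixes F :: "real \<Rightarrow> real"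
  assumes "\<And>y. F differentiable at y" and "\<And>y. a < y \<Longrightarrow> y < b \<Longrightarrow> m \<le> deriv F y"
    and "a \<le> b"
  shows "F a + (b - a) * m \<le> F b"
proof (cases "a = b")
  case False
  then obtain z where z: "a < z" "z < b" and mvt: "F b - F a = (b - a) * deriv F z"
    using MVT2[of a b F "deriv F"] assms(1,3) DERIV_deriv_iff_real_differentiable by force
  have "(b - a) * m \<le> (b - a) * deriv F z"
    using assms(2)[OF z] assms(3) by (intro mult_left_mono) auto
  then show ?thesis using mvt by simp
qed simp

section \<open>Empirical quantiles\<close>

lemma card_le_lt_of_lt_emp_quantile:
  assumes "finite I" "I \<noteq> {}" "0 < \<beta>" "s < emp_quantile \<beta> I t"
  shows "real (card {i\<in>I. t i \<le> s}) < \<beta> * card I"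
proof (rule ccontr)
  let ?S = "{s. \<beta> * real (card I) \<le> real (card {i\<in>I. t i \<le> s})}"
  assume "\<not> ?thesis"
  then have "s \<in> ?S" by simp
  moreover have "Min (t ` I) \<le> s'" if "s' \<in> ?S" for s'
  proof -
    have "0 < \<beta> * card I" using assms by (simp add: card_gt_0_iff)
    then have "0 < real (card {i\<in>I. t i \<le> s'})" using that by simp
    then obtain i where "i \<in> I" "t i \<le> s'"
      by (metis (mono_tags, lifting) card.empty empty_Collect_eq less_irrefl of_nat_0)
    then show ?thesis using assms(1) by (auto intro: Min_le_iff[THEN iffD2])
  qed
  then have "bdd_below ?S" by (auto simp: bdd_below_def)
  ultimately have "Inf ?S \<le> s" by (rule cInf_lower)
  then show False using assms(4) by (simp add: emp_quantile_def)
qed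

lemma card_le_ge_of_emp_quantile_lt:
  assumes "finite I" "\<beta> \<le> 1" "emp_quantile \<beta> I t < s"
  shows "\<beta> * card I \<le> real (card {i\<in>I. t i \<le> s})"
proof -
  define S where "S = {s. \<beta> * real (card I) \<le> real (card {i\<in>I. t i \<le> s})}"
  have "t i \<le> Max (t ` I)" if "i \<in> I" for i
    using assms(1) that by (intro Max_ge) auto
  then have "{i\<in>I. t i \<le> Max (t ` I)} = I" by blast
  moreover have "\<beta> * card I \<le> real (card I)"
    using assms(2) mult_right_mono[of \<beta> 1 "real (card I)"] by simp
  ultimately have "Max (t ` I) \<in> S" by (simp add: S_def)
  then have "S \<noteq> {}" by blast
  then obtain s' where "s' \<in> S" "s' < s"
    using cInf_lessD[of S s] assms(3) unfolding emp_quantile_def S_def by blast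
  moreover have "card {i\<in>I. t i \<le> s'} \<le> card {i\<in>I. t i \<le> s}"
    using \<open>s' < s\<close> assms(1) by (intro card_mono) auto
  ultimately show ?thesis by (simp add: S_def)
qed

lemma emp_quantile_close:
  fixes T U :: "nat \<Rightarrow> real"
  assumes I: "finite I" "I \<noteq> {}" and c: "0 < c" and \<beta>: "0 < \<beta>" "\<beta> \<le> 1"
    and close: "\<And>i. i \<in> I - B \<Longrightarrow> \<bar>T i - U i\<bar> < c/2"
    and B: "B \<subseteq> I" "real (card B) < c * card I / 4"
    and above: "(\<beta> + c/4) * card I < real (card {i\<in>I. U i < \<beta> + c/2})"
    and below: "real (card {i\<in>I. U i < \<beta> - c/2}) < (\<beta> - c/4) * card I"
  shows "\<bar>emp_quantile \<beta> I T - \<beta>\<bar> \<le> c"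
proof -
  have card_le: "real (card {i\<in>I. P i}) \<le> real (card {i\<in>I. Q i}) + real (card B)"
    if "\<And>i. i \<in> I - B \<Longrightarrow> P i \<Longrightarrow> Q i" for P Q
  proof -
    have "{i\<in>I. P i} \<subseteq> {i\<in>I. Q i} \<union> B" using that by blast
    then have "card {i\<in>I. P i} \<le> card ({i\<in>I. Q i} \<union> B)"
      using I(1) B(1) by (intro card_mono) (auto intro: finite_subset)
    also have "\<dots> \<le> card {i\<in>I. Q i} + card B" by (rule card_Un_le)
    finally show ?thesis by linarith
  qed
  have "emp_quantile \<beta> I T \<le> \<beta> + c"
  proof (rule ccontr)
    assume "\<not> ?thesis"
    then have "real (card {i\<in>I. T i \<le> \<beta> + c}) < \<beta> * card I"
      using card_le_lt_of_lt_emp_quantile[OF I \<beta>(1)] by simp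
    moreover have "real (card {i\<in>I. U i < \<beta> + c/2}) \<le> real (card {i\<in>I. T i \<le> \<beta> + c}) + real (card B)"
      using close unfolding abs_less_iff by (intro card_le) fastforce
    ultimately show False using above B(2) by (simp add: algebra_simps)
  qed
  moreover have "\<beta> - c \<le> emp_quantile \<beta> I T"
  proof (rule ccontr)
    assume "\<not> ?thesis"
    then have "\<beta> * card I \<le> real (card {i\<in>I. T i \<le> \<beta> - c})"
      using card_le_ge_of_emp_quantile_lt[OF I(1) \<beta>(2)] by simp
    moreover have "real (card {i\<in>I. T i \<le> \<beta> - c}) \<le> real (card {i\<in>I. U i < \<beta> - c/2}) + real (card B)"
      using close unfolding abs_less_iff by (intro card_le) fastforce
    ultimately show False using below B(2) by (simp add: algebra_simps)
  qed
  ultimately show ?thesis by (simp add: abs_le_iff)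
qed

section \<open>Uniform distance between distribution functions\<close>

definition sup_sq_diff :: "(real \<Rightarrow> real) \<Rightarrow> (real \<Rightarrow> real) \<Rightarrow> real" where
  "sup_sq_diff G H = (SUP y. (G y - H y)\<^sup>2)"

lemma cdf_sq_diff_le_one:
  assumes "is_cdf G" "is_cdf H"
  shows "(G y - H y)\<^sup>2 \<le> 1"
proof -
  have "\<bar>G y - H y\<bar> \<le> 1"
    using assms[THEN is_cdf_nonneg, of y] assms[THEN is_cdf_le_one, of y] by auto
  then have "\<bar>G y - H y\<bar>\<^sup>2 \<le> 1\<^sup>2" by (intro power_mono) auto
  then show ?thesis by simp
qed

lemma sq_diff_le_sup_sq_diff:
  assumes "is_cdf G" "is_cdf H"
  shows "(G y - H y)\<^sup>2 \<le> sup_sq_diff G H"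
  unfolding sup_sq_diff_def
  using cdf_sq_diff_le_one[OF assms] by (intro cSUP_upper) (auto simp: bdd_above_def)

lemma sup_sq_diff_nonneg:
  assumes "is_cdf G" "is_cdf H"
  shows "0 \<le> sup_sq_diff G H"
  using sq_diff_le_sup_sq_diff[OF assms, of 0] zero_le_power2 order.trans by blast

lemma sup_sq_diff_le_one:
  assumes "is_cdf G" "is_cdf H"
  shows "sup_sq_diff G H \<le> 1"
  unfolding sup_sq_diff_def using cdf_sq_diff_le_one[OF assms] by (intro cSUP_least) auto

text \<open>Right continuity lets the supremum be taken over the rationals, which makes it measurable.\<close>
lemma sup_sq_diff_eq_SUP_Rats:
  assumes G: "is_cdf G" and H: "is_cdf H"
  shows "sup_sq_diff G H = (SUP r\<in>\<rat>. (G r - H r)\<^sup>2)"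
proof (rule antisym)
  have bdd: "bdd_above ((\<lambda>y. (G y - H y)\<^sup>2) ` \<rat>)"
    using cdf_sq_diff_le_one[OF assms] by (auto simp: bdd_above_def)
  show "sup_sq_diff G H \<le> (SUP r\<in>\<rat>. (G r - H r)\<^sup>2)"
    unfolding sup_sq_diff_def
  proof (rule cSUP_least)
    fix y
    show "(G y - H y)\<^sup>2 \<le> (SUP r\<in>\<rat>. (G r - H r)\<^sup>2)"
    proof (rule ccontr)
      assume "\<not> ?thesis"
      then have lt: "(SUP r\<in>\<rat>. (G r - H r)\<^sup>2) < (G y - H y)\<^sup>2" by simp
      have "((\<lambda>t. (G t - H t)\<^sup>2) \<longlongrightarrow> (G y - H y)\<^sup>2) (at_right y)"
        using G H unfolding is_cdf_def continuous_within by (intro tendsto_intros) auto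
      from order_tendstoD(1)[OF this lt]
      obtain b where "b > y" and b: "\<And>t. y < t \<Longrightarrow> t < b \<Longrightarrow> (SUP r\<in>\<rat>. (G r - H r)\<^sup>2) < (G t - H t)\<^sup>2"
        by (auto simp: eventually_at_right_field)
      obtain r where r: "r \<in> \<rat>" "y < r" "r < b" using Rats_dense_in_real[OF \<open>b > y\<close>] by auto
      then show False using b[OF r(2,3)] cSUP_upper[OF r(1) bdd] by simp
    qed
  qed simp
  show "(SUP r\<in>\<rat>. (G r - H r)\<^sup>2) \<le> sup_sq_diff G H"
    unfolding sup_sq_diff_def using cdf_sq_diff_le_one[OF assms]
    by (intro cSUP_subset_mono) (auto simp: bdd_above_def)
qed

lemma borel_measurable_sup_sq_diff:
  fixes E :: "'d \<Rightarrow> 'a \<Rightarrow> real \<Rightarrow> real"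
  assumes E: "(\<lambda>(d, x, y). E d x y) \<in> borel_measurable (N \<Otimes>\<^sub>M Mx \<Otimes>\<^sub>M borel)"
   and E_cdf: "\<And>d x. d \<in> space N \<Longrightarrow> is_cdf (E d x)"
   and F: "\<And>y. (\<lambda>x. F x y) \<in> borel_measurable Mx" and F_cdf: "\<And>x. is_cdf (F x)"
  shows "(\<lambda>(d, x). sup_sq_diff (E d x) (F x)) \<in> borel_measurable (N \<Otimes>\<^sub>M Mx)"
proof -
  have E_at: "(\<lambda>p. E (fst p) (snd p) r) \<in> borel_measurable (N \<Otimes>\<^sub>M Mx)" for r
  proof -
    have "(\<lambda>p. (fst p, snd p, r)) \<in> measurable (N \<Otimes>\<^sub>M Mx) (N \<Otimes>\<^sub>M Mx \<Otimes>\<^sub>M borel)"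
      by measurable
    from measurable_compose[OF this E] show ?thesis by simp
  qed
  have "(\<lambda>p. SUP r\<in>\<rat>. (E (fst p) (snd p) r - F (snd p) r)\<^sup>2) \<in> borel_measurable (N \<Otimes>\<^sub>M Mx)"
  proof (rule borel_measurable_cSUP[OF countable_rat])
    show "(\<lambda>p. (E (fst p) (snd p) r - F (snd p) r)\<^sup>2) \<in> borel_measurable (N \<Otimes>\<^sub>M Mx)" for r
      using E_at measurable_compose[OF measurable_snd F] by measurable
    show "bdd_above ((\<lambda>r. (E (fst p) (snd p) r - F (snd p) r)\<^sup>2) ` \<rat>)"
      if "p \<in> space (N \<Otimes>\<^sub>M Mx)" for p
      unfolding bdd_above_def using that cdf_sq_diff_le_one[OF E_cdf F_cdf]
      by (intro exI[of _ 1]) (auto simp: space_pair_measure)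
  qed
  then show ?thesis
    by (rule measurable_cong[THEN iffD1, rotated])
       (auto simp: space_pair_measure sup_sq_diff_eq_SUP_Rats[OF E_cdf F_cdf])
qed

section \<open>The probability integral transform\<close>

lemma cond_cdf_measure_Union_rectangles:
  assumes P: "prob_space P" "sets P = sets (Mx \<Otimes>\<^sub>M borel)" and F: "cond_cdf P Mx F"
    and R: "finite R" and A: "\<And>r. r \<in> R \<Longrightarrow> A r \<in> sets Mx" and disj: "disjoint_family_on A R"
  shows "measure P (\<Union>r\<in>R. A r \<times> {..r}) = (\<integral>x. (\<Sum>r\<in>R. indicator (A r) x * F x r) \<partial>distr P Mx fst)"
proof -
  interpret P: prob_space P by (rule P(1))
  interpret PX: prob_space "distr P Mx fst"
    using P by (intro P.prob_space_distr) (simp add: measurable_cong_sets[OF P(2) refl])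
  have F_meas: "(\<lambda>x. F x y) \<in> borel_measurable Mx" and F_cdf: "is_cdf (F x)" for x y
    using F by (auto simp: cond_cdf_def)
  have integrable: "integrable (distr P Mx fst) (\<lambda>x. indicator (A r) x * F x r)" if "r \<in> R" for r
    using A[OF that] F_meas is_cdf_nonneg[OF F_cdf] is_cdf_le_one[OF F_cdf]
    by (intro PX.integrable_const_bound[of _ 1]) (auto simp: indicator_def)
  have "disjoint_family_on (\<lambda>r. A r \<times> {..r}) R"
    unfolding disjoint_family_on_def
  proof (intro ballI impI)
    fix m n assume "m \<in> R" "n \<in> R" "m \<noteq> n"
    then have "A m \<inter> A n = {}" using disj by (simp add: disjoint_family_on_def)
    then show "A m \<times> {..m} \<inter> A n \<times> {..n} = {}" by blast
  qed
  then have "measure P (\<Union>r\<in>R. A r \<times> {..r}) = (\<Sum>r\<in>R. measure P (A r \<times> {..r}))"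
    using A P(2) R by (intro P.finite_measure_finite_Union) auto
  also have "\<dots> = (\<Sum>r\<in>R. \<integral>x. indicator (A r) x * F x r \<partial>distr P Mx fst)"
    using A F by (intro sum.cong) (auto simp: cond_cdf_def)
  also have "\<dots> = (\<integral>x. (\<Sum>r\<in>R. indicator (A r) x * F x r) \<partial>distr P Mx fst)"
    using integrable by (subst Bochner_Integration.integral_sum) auto
  finally show ?thesis .
qed

text \<open>For a finite grid \<open>R\<close>, the event that \<open>Y\<close> lies below some grid point where \<open>F(\<cdot> | X) < v\<close>
  splits according to the largest such grid point.\<close>
lemma cond_cdf_measure_below_grid:
  fixes v :: real
  assumes P: "prob_space P" "sets P = sets (Mx \<Otimes>\<^sub>M borel)" and F: "cond_cdf P Mx F" and R: "finite R"
  defines "G \<equiv> \<lambda>x. if \<exists>r\<in>R. F x r < v then F x (Max {r\<in>R. F x r < v}) else 0"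
  shows "{z\<in>space P. \<exists>r\<in>R. F (fst z) r < v \<and> snd z \<le> r} \<in> sets P"
    and "G \<in> borel_measurable Mx"
    and "measure P {z\<in>space P. \<exists>r\<in>R. F (fst z) r < v \<and> snd z \<le> r} = (\<integral>x. G x \<partial>distr P Mx fst)"
proof -
  have space_P: "space P = space Mx \<times> UNIV"
    using sets_eq_imp_space_eq[OF P(2)] by (simp add: space_pair_measure)
  have F_meas [measurable]: "\<And>y. (\<lambda>x. F x y) \<in> borel_measurable Mx"
    using F by (auto simp: cond_cdf_def)
  define A where "A r = {x\<in>space Mx. F x r < v \<and> (\<forall>r'\<in>R. F x r' < v \<longrightarrow> r' \<le> r)}" for r
  have A_sets: "A r \<in> sets Mx" for r
    unfolding A_def using R by measurable
  have disj: "disjoint_family_on A R"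
    by (auto simp: disjoint_family_on_def A_def intro: antisym)
  have max_low: "Max {r\<in>R. F x r < v} \<in> R" "F x (Max {r\<in>R. F x r < v}) < v"
    "\<And>r. r \<in> R \<Longrightarrow> F x r < v \<Longrightarrow> r \<le> Max {r\<in>R. F x r < v}"
    if "\<exists>r\<in>R. F x r < v" for x
    using Max_in[of "{r\<in>R. F x r < v}"] R that by auto
  have A_iff: "x \<in> A r \<longleftrightarrow> (\<exists>r\<in>R. F x r < v) \<and> r = Max {r\<in>R. F x r < v}"
    if "x \<in> space Mx" "r \<in> R" for x r
    using that max_low[of x] by (auto simp: A_def intro: antisym)
  have set_eq: "{z\<in>space P. \<exists>r\<in>R. F (fst z) r < v \<and> snd z \<le> r} = (\<Union>r\<in>R. A r \<times> {..r})"
  proof (intro set_eqI iffI)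
    fix z assume "z \<in> {z\<in>space P. \<exists>r\<in>R. F (fst z) r < v \<and> snd z \<le> r}"
    then obtain r where "fst z \<in> space Mx" "r \<in> R" "F (fst z) r < v" "snd z \<le> r"
      by (auto simp: space_P)
    then show "z \<in> (\<Union>r\<in>R. A r \<times> {..r})"
      using max_low[of "fst z"] A_iff[of "fst z"] by (intro UN_I[of "Max {r\<in>R. F (fst z) r < v}"])
        (auto simp: mem_Times_iff intro: order_trans)
  qed (auto simp: A_def space_P)
  have G_eq: "G x = (\<Sum>r\<in>R. indicator (A r) x * F x r)" if "x \<in> space Mx" for x
  proof -
    have "(\<Sum>r\<in>R. indicator (A r) x * F x r) =
        (\<Sum>r\<in>R. if (\<exists>r\<in>R. F x r < v) \<and> r = Max {r\<in>R. F x r < v} then F x r else 0)"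
      using that A_iff by (intro sum.cong) (auto simp: indicator_def)
    then show ?thesis using max_low by (simp add: G_def sum.delta' R)
  qed
  show "{z\<in>space P. \<exists>r\<in>R. F (fst z) r < v \<and> snd z \<le> r} \<in> sets P"
    unfolding set_eq using A_sets R P(2) by auto
  show "G \<in> borel_measurable Mx"
    using A_sets by (subst measurable_cong[OF G_eq]) auto
  show "measure P {z\<in>space P. \<exists>r\<in>R. F (fst z) r < v \<and> snd z \<le> r} = (\<integral>x. G x \<partial>distr P Mx fst)"
    unfolding set_eq cond_cdf_measure_Union_rectangles[OF P F R A_sets disj]
    using G_eq by (intro Bochner_Integration.integral_cong) auto
qed

lemma cdf_Max_grid_below_tendsto:
  fixes G :: "real \<Rightarrow> real" and q :: "nat \<Rightarrow> real"
  assumes G: "is_cdf G" "\<And>y. isCont G y" and q: "range q = \<rat>" and v: "0 < v" "v < 1"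
  shows "(\<lambda>k. if \<exists>r\<in>q ` {..<k}. G r < v then G (Max {r\<in>q ` {..<k}. G r < v}) else 0) \<longlonglongrightarrow> v"
    (is "?W \<longlonglongrightarrow> v")
proof (rule LIMSEQ_I)
  fix e :: real assume "0 < e"
  define g where "g = ginv G v"
  have "G g = v" unfolding g_def by (rule cdf_ginv_eq[OF G(1) v G(2)])
  obtain d where "d > 0" and d: "\<And>t. dist t g < d \<Longrightarrow> dist (G t) (G g) < e"
    using G(2)[of g] \<open>0 < e\<close> unfolding continuous_at_eps_delta by blast
  obtain r where r: "r \<in> \<rat>" "g - d < r" "r < g" using Rats_dense_in_real[of "g - d" g] \<open>d > 0\<close> by auto
  have below: "G r < v" using r ginv_le_iff[OF G(1) v] by (auto simp: g_def not_le[symmetric])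
  have close: "v - e < G r" using d[of r] r \<open>G g = v\<close> by (auto simp: dist_real_def)
  obtain m where "q m = r" using q r by (metis rangeE)
  show "\<exists>k0. \<forall>k\<ge>k0. norm (?W k - v) < e"
  proof (intro exI[of _ "Suc m"] allI impI)
    fix k assume "Suc m \<le> k"
    then have "r \<in> q ` {..<k}" using \<open>q m = r\<close> by auto
    moreover have "finite {r\<in>q ` {..<k}. G r < v}" by simp
    ultimately have "G r \<le> ?W k" "?W k < v"
      using below Max_in[of "{r\<in>q ` {..<k}. G r < v}"] G(1)
      by (auto simp: is_cdf_def intro!: monoD[of G] Max_ge)
    then show "norm (?W k - v) < e" using close by simp
  qed
qed

text \<open>By right continuity the event \<open>F(Y | X) < v\<close> is the increasing union of the grid events over the
  first \<open>k\<close> rationals; by continuity of \<open>F(\<cdot> | x)\<close> at its \<open>v\<close>-quantile their measures tend to \<open>v\<close>.\<close>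
lemma cond_cdf_pit:
  assumes P: "prob_space P" "sets P = sets (Mx \<Otimes>\<^sub>M borel)" and F: "cond_cdf P Mx F"
    and cont: "\<And>x y. isCont (F x) y" and v: "0 < v" "v < 1"
  shows "{z\<in>space P. F (fst z) (snd z) < v} \<in> sets P"
    and "measure P {z\<in>space P. F (fst z) (snd z) < v} = v"
proof -
  interpret P: prob_space P by (rule P(1))
  interpret PX: prob_space "distr P Mx fst"
    using P by (intro P.prob_space_distr) (simp add: measurable_cong_sets[OF P(2) refl])
  have F_cdf: "\<And>x. is_cdf (F x)" using F by (auto simp: cond_cdf_def)
  have F_mono: "mono (F x)" for x using F_cdf by (simp add: is_cdf_def)
  define q where "q = from_nat_into (\<rat>::real set)"
  have q: "range q = \<rat>" unfolding q_def by (rule range_from_nat_into) (auto simp: countable_rat)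
  define S where "S k = {z\<in>space P. \<exists>r\<in>q ` {..<k}. F (fst z) r < v \<and> snd z \<le> r}" for k
  define G where "G k x = (if \<exists>r\<in>q ` {..<k}. F x r < v then F x (Max {r\<in>q ` {..<k}. F x r < v}) else 0)"
    for k x
  define E where "E = {z\<in>space P. F (fst z) (snd z) < v}"
  note grid = cond_cdf_measure_below_grid[OF P F, of "q ` {..<k}" v for k, folded S_def G_def, simplified]
  have "(\<Union>k. S k) = E"
  proof (intro set_eqI iffI)
    fix z assume "z \<in> (\<Union>k. S k)"
    then show "z \<in> E" by (auto simp: S_def E_def intro: le_less_trans[OF monoD[OF F_mono]])
  next
    fix z assume z: "z \<in> E"
    have "eventually (\<lambda>t. F (fst z) t < v) (at_right (snd z))"
      using F_cdf[of "fst z"] z by (intro order_tendstoD(2)) (auto simp: is_cdf_def continuous_within E_def)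
    then obtain b where "b > snd z" and b: "\<And>t. snd z < t \<Longrightarrow> t < b \<Longrightarrow> F (fst z) t < v"
      by (auto simp: eventually_at_right_field)
    obtain r where r: "r \<in> \<rat>" "snd z < r" "r < b" using Rats_dense_in_real[OF \<open>b > snd z\<close>] by auto
    then obtain m where "q m = r" using q by (metis rangeE)
    then have "z \<in> S (Suc m)"
      using z r b[OF r(2,3)] by (auto simp: S_def E_def intro!: bexI[of _ m])
    then show "z \<in> (\<Union>k. S k)" by blast
  qed
  moreover have "incseq S"
    by (auto simp: incseq_def S_def)
  ultimately have E: "E \<in> sets P" "(\<lambda>k. measure P (S k)) \<longlonglongrightarrow> measure P E"
    using grid(1) by (auto intro!: P.finite_Lim_measure_incseq)
  then show "{z\<in>space P. F (fst z) (snd z) < v} \<in> sets P" by (simp add: E_def)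
  have G_lim: "(\<lambda>k. G k x) \<longlonglongrightarrow> v" for x
    using cdf_Max_grid_below_tendsto[OF F_cdf cont q v] by (simp add: G_def)
  have "(\<lambda>k. \<integral>x. G k x \<partial>distr P Mx fst) \<longlonglongrightarrow> (\<integral>x. v \<partial>distr P Mx fst)"
  proof (rule integral_dominated_convergence[where w = "\<lambda>_. 1"])
    show "AE x in distr P Mx fst. norm (G k x) \<le> 1" for k
      using is_cdf_nonneg[OF F_cdf] is_cdf_le_one[OF F_cdf] by (simp add: G_def)
  qed (use grid(2) G_lim in auto)
  then have "(\<lambda>k. measure P (S k)) \<longlonglongrightarrow> v"
    using grid(3) PX.prob_space by simp
  with E(2) show "measure P {z\<in>space P. F (fst z) (snd z) < v} = v"
    unfolding E_def using LIMSEQ_unique by blast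
qed

section \<open>Probability inequalities\<close>

context prob_space
begin

lemma prob_tendsto_zero_if_covered:
  assumes "eventually (\<lambda>n. A n \<subseteq> B n) sequentially" and "\<And>n. B n \<in> events"
    and "(\<lambda>n. prob (B n)) \<longlonglongrightarrow> 0"
  shows "(\<lambda>n. prob (A n)) \<longlonglongrightarrow> 0"
proof (rule Lim_null_comparison[OF _ assms(3)])
  show "eventually (\<lambda>n. norm (prob (A n)) \<le> prob (B n)) sequentially"
    using assms(1) by eventually_elim (use assms(2) finite_measure_mono in auto)
qed

lemma prob_Un_tendsto_zero:
  assumes "\<And>n. A n \<in> events" "\<And>n. B n \<in> events"
    and "(\<lambda>n. prob (A n)) \<longlonglongrightarrow> 0" "(\<lambda>n. prob (B n)) \<longlonglongrightarrow> 0"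
  shows "(\<lambda>n. prob (A n \<union> B n)) \<longlonglongrightarrow> 0"
proof (rule Lim_null_comparison)
  show "eventually (\<lambda>n. norm (prob (A n \<union> B n)) \<le> prob (A n) + prob (B n)) sequentially"
    using assms(1,2) by (intro always_eventually allI) (simp add: measure_Un_le)
qed (use tendsto_add[OF assms(3,4)] in simp)

lemma card_Collect_eq_sum_indicator:
  assumes "finite I"
  shows "real (card {i\<in>I. x \<in> B i}) = (\<Sum>i\<in>I. indicator (B i) x)"
  using assms by (simp add: indicator_def Collect_conj_eq)

lemma borel_measurable_card_Collect:
  assumes "finite I" and "\<And>i. i \<in> I \<Longrightarrow> Measurable.pred M (P i)"
  shows "(\<lambda>\<omega>. real (card {i\<in>I. P i \<omega>})) \<in> borel_measurable M"
proof -
  have "(\<lambda>\<omega>. \<Sum>i\<in>I. of_bool (P i \<omega>) :: real) \<in> borel_measurable M"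
    using assms(2) by (intro borel_measurable_sum measurable_compose[OF _ measurable_of_bool])
  then show ?thesis using assms(1) by (simp add: Collect_conj_eq)
qed

lemma prob_card_ge_le:
  assumes I: "finite I" and B: "\<And>i. i \<in> I \<Longrightarrow> B i \<in> events" and "0 < K"
  shows "prob {\<omega>\<in>space M. K \<le> real (card {i\<in>I. \<omega> \<in> B i})} \<le> (\<Sum>i\<in>I. prob (B i)) / K"
proof -
  have integrable: "integrable M (\<lambda>\<omega>. \<Sum>i\<in>I. indicator (B i) \<omega> :: real)"
    using B by (intro Bochner_Integration.integrable_sum)
      (auto intro!: integrable_real_indicator simp: less_top[symmetric])
  have "prob {\<omega>\<in>space M. K \<le> (\<Sum>i\<in>I. indicator (B i) \<omega>)} \<le> (\<integral>\<omega>. (\<Sum>i\<in>I. indicator (B i) \<omega>) \<partial>M) / K"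
    by (rule integral_Markov_inequality_measure[OF integrable _ _ \<open>0 < K\<close>, where A = "space M"])
       (auto intro!: sum_nonneg)
  also have "(\<integral>\<omega>. (\<Sum>i\<in>I. indicator (B i) \<omega>) \<partial>M) = (\<Sum>i\<in>I. prob (B i))"
    using B by (subst Bochner_Integration.integral_sum)
      (auto intro!: integrable_real_indicator simp: less_top[symmetric])
  finally show ?thesis by (simp add: card_Collect_eq_sum_indicator[OF I])
qed

lemma integral_indep_var_iterated:
  fixes k :: "'d \<times> 'd \<Rightarrow> real"
  assumes indep: "indep_var N D Mx X" and k: "k \<in> borel_measurable (N \<Otimes>\<^sub>M Mx)"
    and k_bounded: "\<And>p. p \<in> space (N \<Otimes>\<^sub>M Mx) \<Longrightarrow> \<bar>k p\<bar> \<le> B"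
  shows "integrable (distr M N D) (\<lambda>d. \<integral>x. k (d, x) \<partial>distr M Mx X)"
    and "(\<integral>\<omega>. k (D \<omega>, X \<omega>) \<partial>M) = (\<integral>d. (\<integral>x. k (d, x) \<partial>distr M Mx X) \<partial>distr M N D)"
proof -
  have D: "D \<in> measurable M N" and X: "X \<in> measurable M Mx"
    and prod: "distr M N D \<Otimes>\<^sub>M distr M Mx X = distr M (N \<Otimes>\<^sub>M Mx) (\<lambda>x. (D x, X x))"
    using indep unfolding indep_var_distribution_eq by auto
  interpret ND: prob_space "distr M N D" by (rule prob_space_distr[OF D])
  interpret PX: prob_space "distr M Mx X" by (rule prob_space_distr[OF X])
  interpret ND_PX: pair_prob_space "distr M N D" "distr M Mx X" by unfold_locales
  have sets_prod: "sets (distr M N D \<Otimes>\<^sub>M distr M Mx X) = sets (N \<Otimes>\<^sub>M Mx)"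
    by (rule sets_pair_measure_cong) simp_all
  have integrable_k: "integrable (distr M N D \<Otimes>\<^sub>M distr M Mx X) k"
    using k_bounded k sets_eq_imp_space_eq[OF sets_prod]
    by (intro ND_PX.P.integrable_const_bound[where B = B]) (auto simp: measurable_cong_sets[OF sets_prod refl])
  show "integrable (distr M N D) (\<lambda>d. \<integral>x. k (d, x) \<partial>distr M Mx X)"
    by (rule ND_PX.integrable_fst'[OF integrable_k])
  have DX: "(\<lambda>\<omega>. (D \<omega>, X \<omega>)) \<in> measurable M (N \<Otimes>\<^sub>M Mx)" using D X by measurable
  have "(\<integral>\<omega>. k (D \<omega>, X \<omega>) \<partial>M) = integral\<^sup>L (distr M N D \<Otimes>\<^sub>M distr M Mx X) k"
    using integral_distr[OF DX k] prod by simp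
  also have "\<dots> = (\<integral>d. (\<integral>x. k (d, x) \<partial>distr M Mx X) \<partial>distr M N D)"
    by (rule ND_PX.integral_fst'[OF integrable_k, symmetric])
  finally show "(\<integral>\<omega>. k (D \<omega>, X \<omega>) \<partial>M) = (\<integral>d. (\<integral>x. k (d, x) \<partial>distr M Mx X) \<partial>distr M N D)" .
qed

lemma prob_indep_markov:
  fixes H :: "'d \<Rightarrow> 'd \<Rightarrow> real"
  assumes indep: "indep_var N D Mx X" and PX: "distr M Mx X = PX"
    and H: "(\<lambda>(d, x). H d x) \<in> borel_measurable (N \<Otimes>\<^sub>M Mx)"
    and H_bounds: "\<And>d x. d \<in> space N \<Longrightarrow> x \<in> space Mx \<Longrightarrow> 0 \<le> H d x \<and> H d x \<le> 1"
    and "0 < c"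
    and tail: "prob {\<omega>\<in>space M. \<eta> \<le> (\<integral>x. H (D \<omega>) x \<partial>PX)} \<le> \<rho>"
  shows "{\<omega>\<in>space M. c \<le> H (D \<omega>) (X \<omega>)} \<in> events"
    and "prob {\<omega>\<in>space M. c \<le> H (D \<omega>) (X \<omega>)} \<le> \<rho> + \<bar>\<eta>\<bar> / c"
proof -
  have D [measurable]: "D \<in> measurable M N" and X [measurable]: "X \<in> measurable M Mx"
    using indep unfolding indep_var_distribution_eq by auto
  interpret ND: prob_space "distr M N D" by (rule prob_space_distr[OF D])
  interpret PX: prob_space PX unfolding PX[symmetric] by (rule prob_space_distr[OF X])
  define G where "G d = (\<integral>x. H d x \<partial>PX)" for d
  have "sets (N \<Otimes>\<^sub>M PX) = sets (N \<Otimes>\<^sub>M Mx)"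
    by (rule sets_pair_measure_cong) (simp_all add: PX[symmetric])
  then have "(\<lambda>(d, x). H d x) \<in> borel_measurable (N \<Otimes>\<^sub>M PX)"
    using H measurable_cong_sets by blast
  from PX.borel_measurable_lebesgue_integral[OF this]
  have G [measurable]: "G \<in> borel_measurable N"
    unfolding G_def by simp
  define k where "k p = indicator {d\<in>space N. G d < \<eta>} (fst p) * H (fst p) (snd p)" for p
  have k [measurable]: "k \<in> borel_measurable (N \<Otimes>\<^sub>M Mx)"
    unfolding k_def using H by measurable
  have k_bounds: "0 \<le> k p \<and> k p \<le> 1" if "p \<in> space (N \<Otimes>\<^sub>M Mx)" for p
    using H_bounds that by (auto simp: k_def space_pair_measure indicator_def)
  note iterated = integral_indep_var_iterated[OF indep k, of 1]
  have DX [measurable]: "(\<lambda>\<omega>. (D \<omega>, X \<omega>)) \<in> measurable M (N \<Otimes>\<^sub>M Mx)" by measurable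
  have DX_space: "(D \<omega>, X \<omega>) \<in> space (N \<Otimes>\<^sub>M Mx)" if "\<omega> \<in> space M" for \<omega>
    using measurable_space[OF DX that] .
  have [measurable]: "(\<lambda>\<omega>. H (D \<omega>) (X \<omega>)) \<in> borel_measurable M"
    using measurable_compose[OF DX H] by simp
  show "{\<omega>\<in>space M. c \<le> H (D \<omega>) (X \<omega>)} \<in> events"
    by measurable
  have "(\<integral>\<omega>. k (D \<omega>, X \<omega>) \<partial>M) = (\<integral>d. (\<integral>x. k (d, x) \<partial>PX) \<partial>distr M N D)"
    using iterated(2) k_bounds PX by simp
  also have "\<dots> \<le> (\<integral>d. \<bar>\<eta>\<bar> \<partial>distr M N D)"
  proof (rule integral_mono)
    show "(\<integral>x. k (d, x) \<partial>PX) \<le> \<bar>\<eta>\<bar>" for d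
      using abs_ge_self[of \<eta>] by (auto simp: k_def G_def[symmetric] indicator_def)
  qed (use iterated(1) k_bounds PX in auto)
  finally have "(\<integral>\<omega>. k (D \<omega>, X \<omega>) \<partial>M) \<le> \<bar>\<eta>\<bar>"
    using ND.prob_space by simp
  moreover have "prob {\<omega>\<in>space M. c \<le> k (D \<omega>, X \<omega>)} \<le> (\<integral>\<omega>. k (D \<omega>, X \<omega>) \<partial>M) / c"
    using k_bounds DX_space
    by (intro integral_Markov_inequality_measure[OF _ _ _ \<open>0 < c\<close>, where A = "space M"]
        integrable_const_bound[where B = 1]) auto
  ultimately have small_k: "prob {\<omega>\<in>space M. c \<le> k (D \<omega>, X \<omega>)} \<le> \<bar>\<eta>\<bar> / c"
    using \<open>0 < c\<close> by (meson divide_right_mono less_imp_le order_trans)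
  have "{\<omega>\<in>space M. c \<le> H (D \<omega>) (X \<omega>)} \<subseteq>
      {\<omega>\<in>space M. \<eta> \<le> G (D \<omega>)} \<union> {\<omega>\<in>space M. c \<le> k (D \<omega>, X \<omega>)}"
    using measurable_space[OF D] by (auto simp: k_def indicator_def not_le)
  then have "prob {\<omega>\<in>space M. c \<le> H (D \<omega>) (X \<omega>)} \<le>
      prob ({\<omega>\<in>space M. \<eta> \<le> G (D \<omega>)} \<union> {\<omega>\<in>space M. c \<le> k (D \<omega>, X \<omega>)})"
    by (intro finite_measure_mono) measurable
  also have "\<dots> \<le> prob {\<omega>\<in>space M. \<eta> \<le> G (D \<omega>)} + prob {\<omega>\<in>space M. c \<le> k (D \<omega>, X \<omega>)}"
    by (rule measure_Un_le) measurable
  finally show "prob {\<omega>\<in>space M. c \<le> H (D \<omega>) (X \<omega>)} \<le> \<rho> + \<bar>\<eta>\<bar> / c"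
    using tail small_k by (simp add: G_def)
qed

lemma prob_frequency_deviation:
  fixes Z :: "'i \<Rightarrow> 'a \<Rightarrow> 'z"
  assumes indep: "indep_vars (\<lambda>_. N) Z J" and I: "I \<subseteq> J" "finite I" "I \<noteq> {}"
    and ident: "\<And>i. i \<in> I \<Longrightarrow> distr M N (Z i) = Q" and S: "S \<in> sets N" and "0 \<le> e"
  shows "prob {\<omega>\<in>space M. e \<le> \<bar>real (card {i\<in>I. Z i \<omega> \<in> S}) / card I - measure Q S\<bar>}
           \<le> 2 * exp (- 2 * real (card I) * e\<^sup>2)"
proof -
  have Z [measurable]: "\<And>i. i \<in> J \<Longrightarrow> Z i \<in> measurable M N" using indep unfolding indep_vars_def by auto
  obtain i0 where "i0 \<in> I" using I by auto
  define X :: "'i \<Rightarrow> 'a \<Rightarrow> real" where "X = (\<lambda>i \<omega>. indicator S (Z i \<omega>))"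
  have distr_X: "distr M borel (X i) = distr Q borel (indicator S)" if "i \<in> I" for i
  proof -
    have "distr M borel (X i) = distr (distr M N (Z i)) borel (indicator S)"
      using that I S by (subst distr_distr) (auto simp: X_def comp_def)
    then show ?thesis using ident[OF that] by simp
  qed
  interpret H: Hoeffding_ineq_iid M I X "X i0" 0 1 "expectation (X i0)"
  proof unfold_locales
    show "indep_vars (\<lambda>_. borel) X I"
      unfolding X_def using S by (intro indep_vars_compose2[OF indep_vars_subset[OF indep I(1)]]) auto
    show "distr M borel (X i) = distr M borel (X i0)" if "i \<in> I" for i
      using distr_X that \<open>i0 \<in> I\<close> by simp
  qed (use I \<open>i0 \<in> I\<close> S in \<open>auto simp: X_def\<close>)
  have "expectation (X i0) = (\<integral>z. indicator S z \<partial>distr M N (Z i0))"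
    unfolding X_def using S I \<open>i0 \<in> I\<close> by (subst integral_distr) auto
  also have "\<dots> = measure Q S"
    using S by (simp add: ident[OF \<open>i0 \<in> I\<close>, symmetric] sets.Int_space_eq2)
  finally have mean: "expectation (X i0) = measure Q S" .
  have sum_X: "(\<Sum>i\<in>I. X i \<omega>) = real (card {i\<in>I. Z i \<omega> \<in> S})" for \<omega>
    using I(2) by (simp add: X_def indicator_def Collect_conj_eq)
  show ?thesis
    using H.Hoeffding_ineq_abs_ge'[of e] \<open>0 \<le> e\<close> I(3) by (simp add: mean sum_X)
qed

end

lemma measure_symdiff_Icc_le:
  fixes a b c d :: real
  shows "measure lborel (symdiff {a..b} {c..d}) \<le> \<bar>a - c\<bar> + \<bar>b - d\<bar>"
proof -
  have Icc: "{x..y} \<in> fmeasurable lborel" for x y :: real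
    by (intro fmeasurableI) (auto simp: emeasure_lborel_Icc_eq)
  have "symdiff {a..b} {c..d} \<subseteq> {min a c..max a c} \<union> {min b d..max b d}"
    by (auto simp: symdiff_def)
  then have "measure lborel (symdiff {a..b} {c..d}) \<le> measure lborel ({min a c..max a c} \<union> {min b d..max b d})"
    using Icc by (intro measure_mono_fmeasurable) (auto simp: symdiff_def)
  also have "\<dots> \<le> measure lborel {min a c..max a c} + measure lborel {min b d..max b d}"
    by (rule measure_Un_le) auto
  also have "\<dots> = \<bar>a - c\<bar> + \<bar>b - d\<bar>" by (simp add: abs_real_def)
  finally show ?thesis .
qed

text \<open>Data model: \<open>Z (Inl i)\<close> are the calibration pairs (\<open>i = 1..n\<close>) and the test pair (\<open>i = n + 1\<close>),
  \<open>Z (Inr i)\<close> the training pairs on which the estimate \<open>est n\<close> of \<open>F\<close> is fitted.  The pair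
  \<open>Z (Inl 0)\<close> is not part of the sample: it is the reference copy fixing the common law, and its
  feature is the independent copy \<open>X\<close> of (A1).\<close>
locale iid_split_sample = prob_space M
  for M :: "'m measure" and Mx :: "'a measure" and Z :: "nat + nat \<Rightarrow> 'm \<Rightarrow> 'a \<times> real"
    and F :: "'a \<Rightarrow> real \<Rightarrow> real" and est :: "nat \<Rightarrow> (nat \<Rightarrow> 'a \<times> real) \<Rightarrow> 'a \<Rightarrow> real \<Rightarrow> real" +
  assumes indep: "indep_vars (\<lambda>_. Mx \<Otimes>\<^sub>M borel) Z UNIV"
    and ident: "\<And>k. distr M (Mx \<Otimes>\<^sub>M borel) (Z k) = distr M (Mx \<Otimes>\<^sub>M borel) (Z (Inl 0))"
    and cond_cdf: "cond_cdf (distr M (Mx \<Otimes>\<^sub>M borel) (Z (Inl 0))) Mx F"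
    and F_continuous: "\<And>x y. isCont (F x) y"
    and est_measurable: "\<And>n. (\<lambda>(d, x, y). est n d x y)
         \<in> borel_measurable (PiM {1..n} (\<lambda>_. Mx \<Otimes>\<^sub>M borel) \<Otimes>\<^sub>M Mx \<Otimes>\<^sub>M borel)"
    and est_cdf: "\<And>n d x. d \<in> space (PiM {1..n} (\<lambda>_. Mx \<Otimes>\<^sub>M borel)) \<Longrightarrow> is_cdf (est n d x)"
begin

definition train :: "nat \<Rightarrow> 'm \<Rightarrow> nat \<Rightarrow> 'a \<times> real" where
  "train n \<omega> = (\<lambda>i\<in>{1..n}. Z (Inr i) \<omega>)"

definition X :: "nat \<Rightarrow> 'm \<Rightarrow> 'a" where
  "X i \<omega> = fst (Z (Inl i) \<omega>)"

definition Y :: "nat \<Rightarrow> 'm \<Rightarrow> real" where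
  "Y i \<omega> = snd (Z (Inl i) \<omega>)"

definition PX :: "'a measure" where
  "PX = distr M Mx (X 0)"

definition score :: "nat \<Rightarrow> 'm \<Rightarrow> nat \<Rightarrow> real" where
  "score n \<omega> i = est n (train n \<omega>) (X i \<omega>) (Y i \<omega>)"

definition est_error :: "nat \<Rightarrow> (nat \<Rightarrow> 'a \<times> real) \<Rightarrow> 'a \<Rightarrow> real" where
  "est_error n d x = sup_sq_diff (est n d x) (F x)"

definition conf_endpoint :: "nat \<Rightarrow> 'm \<Rightarrow> real \<Rightarrow> real" where
  "conf_endpoint n \<omega> \<beta> = ginv (est n (train n \<omega>) (X (n + 1) \<omega>)) (emp_quantile \<beta> {1..n} (score n \<omega>))"

definition oracle_endpoint :: "nat \<Rightarrow> 'm \<Rightarrow> real \<Rightarrow> real" where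
  "oracle_endpoint n \<omega> \<beta> = ginv (F (X (n + 1) \<omega>)) \<beta>"

definition pit_freq :: "nat \<Rightarrow> 'm \<Rightarrow> real \<Rightarrow> real" where
  "pit_freq n \<omega> v = real (card {i\<in>{1..n}. F (X i \<omega>) (Y i \<omega>) < v}) / n"

lemma Z_measurable [measurable]: "Z k \<in> measurable M (Mx \<Otimes>\<^sub>M borel)"
  using indep unfolding indep_vars_def by auto

lemma X_measurable [measurable]: "X i \<in> measurable M Mx"
  unfolding X_def[abs_def] by measurable

lemma train_space: "\<omega> \<in> space M \<Longrightarrow> train n \<omega> \<in> space (PiM {1..n} (\<lambda>_. Mx \<Otimes>\<^sub>M borel))"
  using measurable_space[OF Z_measurable] by (auto simp: train_def space_PiM)

lemma distr_X: "distr M Mx (X i) = PX"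
proof -
  have "distr M Mx (X i) = distr (distr M (Mx \<Otimes>\<^sub>M borel) (Z (Inl i))) Mx fst"
    by (subst distr_distr) (auto simp: X_def[abs_def] comp_def)
  also have "\<dots> = distr (distr M (Mx \<Otimes>\<^sub>M borel) (Z (Inl 0))) Mx fst"
    by (simp only: ident[of "Inl i"])
  also have "\<dots> = PX"
    by (subst distr_distr) (auto simp: PX_def X_def[abs_def] comp_def)
  finally show ?thesis .
qed

lemma F_cdf: "is_cdf (F x)"
  using cond_cdf by (simp add: cond_cdf_def)

lemma F_measurable [measurable]: "(\<lambda>x. F x y) \<in> borel_measurable Mx"
  using cond_cdf by (simp add: cond_cdf_def)

lemma est_error_bounds:
  assumes "d \<in> space (PiM {1..n} (\<lambda>_. Mx \<Otimes>\<^sub>M borel))"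
  shows "0 \<le> est_error n d x" "est_error n d x \<le> 1"
  using sup_sq_diff_nonneg sup_sq_diff_le_one est_cdf[OF assms] F_cdf by (auto simp: est_error_def)

lemma sq_diff_le_est_error:
  assumes "\<omega> \<in> space M"
  shows "(est n (train n \<omega>) x y - F x y)\<^sup>2 \<le> est_error n (train n \<omega>) x"
  unfolding est_error_def by (rule sq_diff_le_sup_sq_diff[OF est_cdf[OF train_space[OF assms]] F_cdf])

lemma est_error_measurable:
  "(\<lambda>(d, x). est_error n d x) \<in> borel_measurable (PiM {1..n} (\<lambda>_. Mx \<Otimes>\<^sub>M borel) \<Otimes>\<^sub>M Mx)"
  unfolding est_error_def using est_measurable est_cdf F_measurable F_cdf
  by (intro borel_measurable_sup_sq_diff) auto

lemma train_measurable [measurable]: "train n \<in> measurable M (PiM {1..n} (\<lambda>_. Mx \<Otimes>\<^sub>M borel))"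
  unfolding train_def[abs_def] by (auto intro!: measurable_restrict)

lemma est_error_at_measurable [measurable]:
  "(\<lambda>\<omega>. est_error n (train n \<omega>) (X i \<omega>)) \<in> borel_measurable M"
  using measurable_compose[OF measurable_Pair[OF train_measurable X_measurable] est_error_measurable]
  by simp

lemma card_est_error_ge_measurable [measurable]:
  "(\<lambda>\<omega>. real (card {i\<in>{1..n}. t \<le> est_error n (train n \<omega>) (X i \<omega>)})) \<in> borel_measurable M"
  by (intro borel_measurable_card_Collect) auto

text \<open>The training half is independent of every other sample point, so Markov's inequality can be
  applied conditionally on it.\<close>
lemma prob_est_error_ge:
  assumes tail: "prob {\<omega>\<in>space M. \<eta> \<le> (\<integral>x. est_error n (train n \<omega>) x \<partial>PX)} \<le> \<rho>" and "0 < c"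
  shows "prob {\<omega>\<in>space M. c \<le> est_error n (train n \<omega>) (X i \<omega>)} \<le> \<rho> + \<bar>\<eta>\<bar> / c"
proof -
  let ?N = "\<lambda>I. PiM I (\<lambda>_. Mx \<Otimes>\<^sub>M (borel :: real measure))"
  define D where "D \<omega> = restrict (\<lambda>k. Z k \<omega>) (Inr ` {1..n})" for \<omega>
  define W where "W \<omega> = restrict (\<lambda>k. Z k \<omega>) {Inl i}" for \<omega>
  define restr :: "(nat + nat \<Rightarrow> 'a \<times> real) \<Rightarrow> nat \<Rightarrow> 'a \<times> real"
    where "restr d = (\<lambda>j\<in>{1..n}. d (Inr j))" for d
  define H :: "(nat + nat \<Rightarrow> 'a \<times> real) \<Rightarrow> (nat + nat \<Rightarrow> 'a \<times> real) \<Rightarrow> real"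
    where "H d w = est_error n (restr d) (fst (w (Inl i)))" for d w
  have indep_DW: "indep_var (?N (Inr ` {1..n})) D (?N {Inl i}) W"
    unfolding D_def[abs_def] W_def[abs_def] by (rule indep_var_restrict[OF indep]) auto
  have restr_D: "restr (D \<omega>) = train n \<omega>" for \<omega>
    by (auto simp: restr_def D_def train_def)
  have W_i: "fst (W \<omega> (Inl i)) = X i \<omega>" for \<omega>
    by (simp add: W_def X_def)
  have restr_measurable: "restr \<in> measurable (?N (Inr ` {1..n})) (?N {1..n})"
    unfolding restr_def by (auto intro!: measurable_restrict measurable_component_singleton)
  have W_measurable: "(\<lambda>w. fst (w (Inl i))) \<in> measurable (?N {Inl i}) Mx"
    by measurable
  have H: "(\<lambda>(d, w). H d w) \<in> borel_measurable (?N (Inr ` {1..n}) \<Otimes>\<^sub>M ?N {Inl i})"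
    using measurable_compose[OF measurable_Pair[OF measurable_compose[OF measurable_fst restr_measurable]
          measurable_compose[OF measurable_snd W_measurable]] est_error_measurable]
    by (simp add: H_def split_beta')
  have restr_space: "restr d \<in> space (?N {1..n})" if "d \<in> space (?N (Inr ` {1..n}))" for d
    using measurable_space[OF restr_measurable that] .
  have integral_eq: "(\<integral>w. H (D \<omega>) w \<partial>distr M (?N {Inl i}) W) = (\<integral>x. est_error n (train n \<omega>) x \<partial>PX)"
    if "\<omega> \<in> space M" for \<omega>
  proof -
    have [measurable]: "(\<lambda>x. est_error n (train n \<omega>) x) \<in> borel_measurable Mx"
      using measurable_Pair2[OF est_error_measurable train_space[OF that]] by simp
    have W: "W \<in> measurable M (?N {Inl i})"
      unfolding W_def by measurable
    have H_D: "(\<lambda>w. H (D \<omega>) w) \<in> borel_measurable (?N {Inl i})"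
      unfolding H_def restr_D by (rule measurable_compose[OF W_measurable]) simp
    have "(\<integral>w. H (D \<omega>) w \<partial>distr M (?N {Inl i}) W) = (\<integral>\<omega>'. est_error n (train n \<omega>) (X i \<omega>') \<partial>M)"
      by (subst integral_distr[OF W H_D]) (simp add: H_def restr_D W_i)
    also have "\<dots> = (\<integral>x. est_error n (train n \<omega>) x \<partial>PX)"
      by (subst distr_X[of i, symmetric], subst integral_distr) auto
    finally show ?thesis .
  qed
  note markov = prob_indep_markov[OF indep_DW refl H _ \<open>0 < c\<close>, of \<eta> \<rho>]
  have "{\<omega>\<in>space M. c \<le> H (D \<omega>) (W \<omega>)} = {\<omega>\<in>space M. c \<le> est_error n (train n \<omega>) (X i \<omega>)}"
    by (simp add: H_def restr_D W_i)
  moreover have "{\<omega>\<in>space M. \<eta> \<le> (\<integral>w. H (D \<omega>) w \<partial>distr M (?N {Inl i}) W)}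
      = {\<omega>\<in>space M. \<eta> \<le> (\<integral>x. est_error n (train n \<omega>) x \<partial>PX)}"
    using integral_eq by auto
  ultimately show ?thesis
    using markov tail est_error_bounds[OF restr_space] by (auto simp: H_def)
qed

lemma pit_uniform:
  assumes "0 < v" "v < 1"
  shows "{z\<in>space (Mx \<Otimes>\<^sub>M borel). F (fst z) (snd z) < v} \<in> sets (Mx \<Otimes>\<^sub>M borel)"
    and "measure (distr M (Mx \<Otimes>\<^sub>M borel) (Z (Inl 0))) {z\<in>space (Mx \<Otimes>\<^sub>M borel). F (fst z) (snd z) < v} = v"
  using cond_cdf_pit[OF prob_space_distr[OF Z_measurable] _ cond_cdf F_continuous assms] by simp_all

lemma pit_freq_measurable:
  assumes "0 < v" "v < 1"
  shows "(\<lambda>\<omega>. pit_freq n \<omega> v) \<in> borel_measurable M"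
proof -
  have "Measurable.pred M (\<lambda>\<omega>. Z (Inl i) \<omega> \<in> {z\<in>space (Mx \<Otimes>\<^sub>M borel). F (fst z) (snd z) < v})" for i
    using pit_uniform(1)[OF assms] by measurable
  then have "Measurable.pred M (\<lambda>\<omega>. F (X i \<omega>) (Y i \<omega>) < v)" for i
    by (rule measurable_cong[THEN iffD1, rotated])
      (use measurable_space[OF Z_measurable] in \<open>auto simp: X_def Y_def\<close>)
  then show ?thesis
    unfolding pit_freq_def by (intro borel_measurable_divide borel_measurable_card_Collect) auto
qed

lemma prob_pit_freq_deviation:
  assumes "1 \<le> n" and v: "0 < v" "v < 1" and "0 \<le> e"
  shows "prob {\<omega>\<in>space M. e \<le> \<bar>pit_freq n \<omega> v - v\<bar>} \<le> 2 * exp (- 2 * real n * e\<^sup>2)"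
proof -
  define S where "S = {z\<in>space (Mx \<Otimes>\<^sub>M borel). F (fst z) (snd z) < v}"
  have card_eq: "card {k\<in>Inl ` {1..n}. Z k \<omega> \<in> S} = card {i\<in>{1..n}. F (X i \<omega>) (Y i \<omega>) < v}"
    if "\<omega> \<in> space M" for \<omega>
  proof -
    have "{k\<in>Inl ` {1..n}. Z k \<omega> \<in> S} = Inl ` {i\<in>{1..n}. F (X i \<omega>) (Y i \<omega>) < v}"
      using measurable_space[OF Z_measurable that] by (auto simp: S_def X_def Y_def)
    then show ?thesis by (simp add: card_image)
  qed
  have card_Inl: "card (Inl ` {1..n} :: (nat + nat) set) = n"
    by (simp add: card_image)
  have "prob {\<omega>\<in>space M. e \<le> \<bar>real (card {k\<in>Inl ` {1..n}. Z k \<omega> \<in> S}) / card (Inl ` {1..n} :: (nat + nat) set)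
        - measure (distr M (Mx \<Otimes>\<^sub>M borel) (Z (Inl 0))) S\<bar>}
      \<le> 2 * exp (- 2 * real (card (Inl ` {1..n} :: (nat + nat) set)) * e\<^sup>2)"
    using assms(1,4) pit_uniform(1)[OF v] unfolding S_def
    by (intro prob_frequency_deviation[OF indep]) (auto intro: ident)
  also have "{\<omega>\<in>space M. e \<le> \<bar>real (card {k\<in>Inl ` {1..n}. Z k \<omega> \<in> S}) / card (Inl ` {1..n} :: (nat + nat) set)
        - measure (distr M (Mx \<Otimes>\<^sub>M borel) (Z (Inl 0))) S\<bar>}
      = {\<omega>\<in>space M. e \<le> \<bar>pit_freq n \<omega> v - v\<bar>}"
    by (intro Collect_cong conj_cong refl)
      (simp only: card_eq card_Inl pit_freq_def pit_uniform(2)[OF v, folded S_def])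
  finally show ?thesis by (simp only: card_Inl)
qed

definition bad_event :: "nat \<Rightarrow> real \<Rightarrow> real \<Rightarrow> 'm set" where
  "bad_event n c \<beta> =
     {\<omega>\<in>space M. c\<^sup>2 \<le> est_error n (train n \<omega>) (X (n + 1) \<omega>)}
   \<union> {\<omega>\<in>space M. c * n / 4 \<le> real (card {i\<in>{1..n}. (c/2)\<^sup>2 \<le> est_error n (train n \<omega>) (X i \<omega>)})}
   \<union> {\<omega>\<in>space M. c/4 \<le> \<bar>pit_freq n \<omega> (\<beta> + c/2) - (\<beta> + c/2)\<bar>}
   \<union> {\<omega>\<in>space M. c/4 \<le> \<bar>pit_freq n \<omega> (\<beta> - c/2) - (\<beta> - c/2)\<bar>}"

lemma bad_event_sets:
  assumes "0 < c" "0 < \<beta> - c/2" "\<beta> + c/2 < 1"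
  shows "bad_event n c \<beta> \<in> events"
proof -
  have [measurable]: "(\<lambda>\<omega>. pit_freq n \<omega> (\<beta> + c/2)) \<in> borel_measurable M"
    "(\<lambda>\<omega>. pit_freq n \<omega> (\<beta> - c/2)) \<in> borel_measurable M"
    using assms by (auto intro: pit_freq_measurable)
  show ?thesis unfolding bad_event_def by measurable
qed

lemma prob_bad_event_le:
  assumes "1 \<le> n" and c: "0 < c" "0 < \<beta> - c/2" "\<beta> + c/2 < 1"
    and tail: "prob {\<omega>\<in>space M. \<eta> \<le> (\<integral>x. est_error n (train n \<omega>) x \<partial>PX)} \<le> \<rho>"
  shows "prob (bad_event n c \<beta>) \<le> (\<rho> + \<bar>\<eta>\<bar> / c\<^sup>2) + 4 / c * (\<rho> + \<bar>\<eta>\<bar> / (c/2)\<^sup>2)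
      + 4 * exp (- 2 * real n * (c/4)\<^sup>2)"
proof -
  define calib where "calib i = {\<omega>\<in>space M. (c/2)\<^sup>2 \<le> est_error n (train n \<omega>) (X i \<omega>)}" for i
  have calib_sets: "calib i \<in> events" for i
    unfolding calib_def by measurable
  have "{\<omega>\<in>space M. c * n / 4 \<le> real (card {i\<in>{1..n}. (c/2)\<^sup>2 \<le> est_error n (train n \<omega>) (X i \<omega>)})}
      = {\<omega>\<in>space M. c * n / 4 \<le> real (card {i\<in>{1..n}. \<omega> \<in> calib i})}"
    by (auto simp: calib_def)
  also have "prob \<dots> \<le> (\<Sum>i\<in>{1..n}. prob (calib i)) / (c * n / 4)"
    using calib_sets c(1) assms(1) by (intro prob_card_ge_le) auto
  also have "\<dots> \<le> (\<Sum>i\<in>{1..n}. \<rho> + \<bar>\<eta>\<bar> / (c/2)\<^sup>2) / (c * n / 4)"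
    unfolding calib_def using c(1) assms(1)
    by (intro divide_right_mono sum_mono prob_est_error_ge[OF tail]) auto
  also have "\<dots> = 4 / c * (\<rho> + \<bar>\<eta>\<bar> / (c/2)\<^sup>2)"
    using c(1) assms(1) by (simp add: field_simps)
  finally have many: "prob {\<omega>\<in>space M. c * n / 4 \<le> real (card {i\<in>{1..n}. (c/2)\<^sup>2 \<le> est_error n (train n \<omega>) (X i \<omega>)})}
      \<le> 4 / c * (\<rho> + \<bar>\<eta>\<bar> / (c/2)\<^sup>2)" .
  have [measurable]: "(\<lambda>\<omega>. pit_freq n \<omega> (\<beta> + c/2)) \<in> borel_measurable M"
    "(\<lambda>\<omega>. pit_freq n \<omega> (\<beta> - c/2)) \<in> borel_measurable M"
    using c by (auto intro: pit_freq_measurable)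
  have "prob (bad_event n c \<beta>)
      \<le> prob {\<omega>\<in>space M. c\<^sup>2 \<le> est_error n (train n \<omega>) (X (n + 1) \<omega>)}
       + prob {\<omega>\<in>space M. c * n / 4 \<le> real (card {i\<in>{1..n}. (c/2)\<^sup>2 \<le> est_error n (train n \<omega>) (X i \<omega>)})}
       + prob {\<omega>\<in>space M. c/4 \<le> \<bar>pit_freq n \<omega> (\<beta> + c/2) - (\<beta> + c/2)\<bar>}
       + prob {\<omega>\<in>space M. c/4 \<le> \<bar>pit_freq n \<omega> (\<beta> - c/2) - (\<beta> - c/2)\<bar>}"
    unfolding bad_event_def
    by (intro order.trans[OF measure_Un_le] add_mono order.refl; measurable)+
  also have "\<dots> \<le> (\<rho> + \<bar>\<eta>\<bar> / c\<^sup>2) + 4 / c * (\<rho> + \<bar>\<eta>\<bar> / (c/2)\<^sup>2)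
      + 2 * exp (- 2 * real n * (c/4)\<^sup>2) + 2 * exp (- 2 * real n * (c/4)\<^sup>2)"
    using c assms(1)
    by (intro add_mono many prob_est_error_ge[OF tail] prob_pit_freq_deviation) auto
  finally show ?thesis by simp
qed

lemma prob_bad_event_tendsto_zero:
  assumes c: "0 < c" "0 < \<beta> - c/2" "\<beta> + c/2 < 1" and \<eta>: "\<eta> \<longlonglongrightarrow> 0" and \<rho>: "\<rho> \<longlonglongrightarrow> 0"
    and tail: "\<And>n. prob {\<omega>\<in>space M. \<eta> n \<le> (\<integral>x. est_error n (train n \<omega>) x \<partial>PX)} \<le> \<rho> n"
  shows "(\<lambda>n. prob (bad_event n c \<beta>)) \<longlonglongrightarrow> 0"
proof (rule Lim_null_comparison)
  show "eventually (\<lambda>n. norm (prob (bad_event n c \<beta>)) \<le> (\<rho> n + \<bar>\<eta> n\<bar> / c\<^sup>2)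
      + 4 / c * (\<rho> n + \<bar>\<eta> n\<bar> / (c/2)\<^sup>2) + 4 * exp (- 2 * real n * (c/4)\<^sup>2)) sequentially"
    using eventually_ge_at_top[of 1]
  proof eventually_elim
    case (elim n)
    show ?case using prob_bad_event_le[OF elim c tail] by simp
  qed
  have "(\<lambda>n. exp (- 2 * (c/4)\<^sup>2) ^ n) \<longlonglongrightarrow> 0"
    using c(1) by (intro LIMSEQ_power_zero) simp
  moreover have "exp (- 2 * real n * (c/4)\<^sup>2) = exp (- 2 * (c/4)\<^sup>2) ^ n" for n
    by (subst exp_of_nat_mult[symmetric]) (simp add: algebra_simps)
  ultimately have lim_exp: "(\<lambda>n. 4 * exp (- 2 * real n * (c/4)\<^sup>2)) \<longlonglongrightarrow> 0"
    using tendsto_mult_right_zero[of _ sequentially 4] by simp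
  have lim_tail: "(\<lambda>n. \<rho> n + \<bar>\<eta> n\<bar> / d) \<longlonglongrightarrow> 0" for d
    using tendsto_add[OF \<rho> tendsto_divide_zero[OF tendsto_rabs_zero[OF \<eta>]]] by simp
  show "(\<lambda>n. (\<rho> n + \<bar>\<eta> n\<bar> / c\<^sup>2) + 4 / c * (\<rho> n + \<bar>\<eta> n\<bar> / (c/2)\<^sup>2)
      + 4 * exp (- 2 * real n * (c/4)\<^sup>2)) \<longlonglongrightarrow> 0"
    using tendsto_add_zero[OF tendsto_add_zero[OF lim_tail tendsto_mult_right_zero[OF lim_tail]] lim_exp] .
qed

lemma emp_quantile_score_close:
  assumes "1 \<le> n" and good: "\<omega> \<in> space M - bad_event n c \<beta>" and \<beta>: "0 < \<beta>" "\<beta> < 1" and "0 < c"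
  shows "\<bar>emp_quantile \<beta> {1..n} (score n \<omega>) - \<beta>\<bar> \<le> c"
proof -
  let ?U = "\<lambda>i. F (X i \<omega>) (Y i \<omega>)"
  define B where "B = {i\<in>{1..n}. (c/2)\<^sup>2 \<le> est_error n (train n \<omega>) (X i \<omega>)}"
  from good have "\<omega> \<in> space M" and B: "real (card B) < c * card {1..n} / 4"
    and pit_above: "\<bar>pit_freq n \<omega> (\<beta> + c/2) - (\<beta> + c/2)\<bar> < c/4"
    and pit_below: "\<bar>pit_freq n \<omega> (\<beta> - c/2) - (\<beta> - c/2)\<bar> < c/4"
    by (auto simp: bad_event_def B_def not_le)
  have "0 < real n" using \<open>1 \<le> n\<close> by simp
  have close: "\<bar>score n \<omega> i - ?U i\<bar> < c/2" if "i \<in> {1..n} - B" for i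
  proof -
    from that have "\<not> (c/2)\<^sup>2 \<le> est_error n (train n \<omega>) (X i \<omega>)" unfolding B_def by blast
    then have "(score n \<omega> i - ?U i)\<^sup>2 < (c/2)\<^sup>2"
      using sq_diff_le_est_error[OF \<open>\<omega> \<in> space M\<close>] unfolding score_def by (meson not_le order.strict_trans1)
    then show ?thesis
      using \<open>0 < c\<close> power2_less_imp_less[of "\<bar>score n \<omega> i - ?U i\<bar>" "c/2"] by simp
  qed
  have "\<beta> + c/4 < pit_freq n \<omega> (\<beta> + c/2)"
    using pit_above unfolding abs_less_iff by linarith
  then have above: "(\<beta> + c/4) * card {1..n} < real (card {i\<in>{1..n}. ?U i < \<beta> + c/2})"
    using \<open>0 < real n\<close> by (simp add: pit_freq_def pos_less_divide_eq)
  have "pit_freq n \<omega> (\<beta> - c/2) < \<beta> - c/4"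
    using pit_below unfolding abs_less_iff by linarith
  then have below: "real (card {i\<in>{1..n}. ?U i < \<beta> - c/2}) < (\<beta> - c/4) * card {1..n}"
    using \<open>0 < real n\<close> by (simp add: pit_freq_def pos_divide_less_eq)
  have "B \<subseteq> {1..n}" by (auto simp: B_def)
  with close B above below show ?thesis
    using \<open>1 \<le> n\<close> \<beta> \<open>0 < c\<close> by (intro emp_quantile_close) auto
qed

lemma endpoint_close:
  fixes n :: nat and \<omega> :: 'm and \<beta> :: real
  defines "x \<equiv> X (n + 1) \<omega>" and "q \<equiv> oracle_endpoint n \<omega> \<beta>"
  assumes "1 \<le> n" and good: "\<omega> \<in> space M - bad_event n c \<beta>" and \<beta>: "0 < \<beta>" "\<beta> < 1"
    and c: "0 < c" "2 * c \<le> h / Mb" and h: "0 \<le> h" "h < \<delta>"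
    and diff: "\<And>y. F x differentiable at y"
    and slope: "\<And>y. \<bar>y - q\<bar> < \<delta> \<Longrightarrow> 1/Mb \<le> deriv (F x) y"
  shows "\<bar>conf_endpoint n \<omega> \<beta> - q\<bar> \<le> h"
proof -
  let ?G = "est n (train n \<omega>) x" and ?e = "sqrt (est_error n (train n \<omega>) x)"
  from good have "\<omega> \<in> space M" and test: "est_error n (train n \<omega>) x < c\<^sup>2"
    by (auto simp: bad_event_def x_def not_le)
  have uniform: "\<bar>?G y - F x y\<bar> \<le> ?e" for y
    using sq_diff_le_est_error[OF \<open>\<omega> \<in> space M\<close>] by (simp add: real_le_rsqrt)
  have "?e < sqrt (c\<^sup>2)"
    using test est_error_bounds(1)[OF train_space[OF \<open>\<omega> \<in> space M\<close>]] by (intro real_sqrt_less_mono) auto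
  then have "?e < c" using c(1) by simp
  have Fq: "F x q = \<beta>"
    unfolding q_def oracle_endpoint_def x_def using F_cdf \<beta> F_continuous by (rule cdf_ginv_eq)
  have slope_near: "1/Mb \<le> deriv (F x) y" if "q - h < y" "y < q + h" for y
    using that h by (intro slope) (simp add: abs_less_iff)
  have "F x q + (q + h - q) * (1/Mb) \<le> F x (q + h)"
    by (rule increment_ge_of_deriv_ge[OF diff]) (use slope_near h(1) in auto)
  moreover have "F x (q - h) + (q - (q - h)) * (1/Mb) \<le> F x q"
    by (rule increment_ge_of_deriv_ge[OF diff]) (use slope_near h(1) in auto)
  moreover have "mono (F x)" using F_cdf by (simp add: is_cdf_def)
  ultimately show ?thesis
    unfolding conf_endpoint_def x_def[symmetric]
    using Fq uniform emp_quantile_score_close[OF \<open>1 \<le> n\<close> good \<beta> c(1)] \<open>?e < c\<close> c(2)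
    by (intro ginv_perturb[where F = "F x" and e = ?e]) auto
qed

lemma endpoint_consistent:
  assumes \<beta>: "0 < \<beta>" "\<beta> < 1" and "0 < h" "0 < Mb" "0 < \<delta>"
    and \<eta>: "\<eta> \<longlonglongrightarrow> 0" and \<rho>: "\<rho> \<longlonglongrightarrow> 0"
    and tail: "\<And>n. prob {\<omega>\<in>space M. \<eta> n \<le> (\<integral>x. est_error n (train n \<omega>) x \<partial>PX)} \<le> \<rho> n"
    and diff: "\<And>x y. F x differentiable at y"
    and slope: "\<And>x y. \<bar>y - ginv (F x) \<beta>\<bar> < \<delta> \<Longrightarrow> 1/Mb \<le> deriv (F x) y"
  obtains B where "\<And>n. B n \<in> events" and "(\<lambda>n. prob (B n)) \<longlonglongrightarrow> 0"
    and "eventually (\<lambda>n. \<forall>\<omega>\<in>space M - B n. \<bar>conf_endpoint n \<omega> \<beta> - oracle_endpoint n \<omega> \<beta>\<bar> \<le> h) sequentially"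
proof
  define h' where "h' = min h (\<delta>/2)"
  define c where "c = min (h' / Mb / 2) (min \<beta> (1 - \<beta>))"
  have h': "0 < h'" "h' \<le> h" "h' < \<delta>" using \<open>0 < h\<close> \<open>0 < \<delta>\<close> by (auto simp: h'_def)
  have c_le: "c \<le> h' / Mb / 2" "c \<le> \<beta>" "c \<le> 1 - \<beta>" by (auto simp: c_def)
  have "0 < c" using h' \<open>0 < Mb\<close> \<beta> by (auto simp: c_def)
  then have c: "0 < c" "2 * c \<le> h' / Mb" using c_le(1) \<open>0 < Mb\<close> by (simp_all add: field_simps)
  have c_range: "0 < \<beta> - c/2" "\<beta> + c/2 < 1" using c(1) c_le(2,3) by linarith+
  show "bad_event n c \<beta> \<in> events" for n
    using c(1) c_range by (rule bad_event_sets)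
  show "(\<lambda>n. prob (bad_event n c \<beta>)) \<longlonglongrightarrow> 0"
    using c(1) c_range \<eta> \<rho> tail by (rule prob_bad_event_tendsto_zero)
  show "eventually (\<lambda>n. \<forall>\<omega>\<in>space M - bad_event n c \<beta>.
      \<bar>conf_endpoint n \<omega> \<beta> - oracle_endpoint n \<omega> \<beta>\<bar> \<le> h) sequentially"
    using eventually_ge_at_top[of 1]
  proof eventually_elim
    case (elim n)
    have "\<bar>conf_endpoint n \<omega> \<beta> - oracle_endpoint n \<omega> \<beta>\<bar> \<le> h'"
      if "\<omega> \<in> space M - bad_event n c \<beta>" for \<omega>
      using elim that \<beta> c h' diff slope
      by (intro endpoint_close[where \<delta> = \<delta> and Mb = Mb]) (auto simp: oracle_endpoint_def)
    then show ?case using h'(2) by force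
  qed
qed

lemma interval_consistent:
  assumes \<alpha>: "0 < \<alpha>" "\<alpha> < 1" and "0 < Mb" "0 < \<delta>"
    and \<eta>: "\<eta> \<longlonglongrightarrow> 0" and \<rho>: "\<rho> \<longlonglongrightarrow> 0"
    and tail: "\<And>n. prob {\<omega>\<in>space M. \<eta> n \<le> (\<integral>x. est_error n (train n \<omega>) x \<partial>PX)} \<le> \<rho> n"
    and diff: "\<And>x y. F x differentiable at y"
    and slope: "\<And>x y. \<bar>y - ginv (F x) (\<alpha>/2)\<bar> < \<delta> \<or> \<bar>y - ginv (F x) (1 - \<alpha>/2)\<bar> < \<delta>
      \<Longrightarrow> 1/Mb \<le> deriv (F x) y"
  shows "\<forall>\<epsilon>>0. (\<lambda>n. prob {\<omega>\<in>space M. \<epsilon> < measure lborel (symdiff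
      {conf_endpoint n \<omega> (\<alpha>/2)..conf_endpoint n \<omega> (1 - \<alpha>/2)}
      {oracle_endpoint n \<omega> (\<alpha>/2)..oracle_endpoint n \<omega> (1 - \<alpha>/2)})}) \<longlonglongrightarrow> 0"
    (is "\<forall>\<epsilon>>0. (\<lambda>n. prob (?A \<epsilon> n)) \<longlonglongrightarrow> 0")
proof (intro allI impI)
  fix \<epsilon> :: real assume "0 < \<epsilon>"
  then have "0 < \<epsilon>/3" by simp
  have slope_lower: "1/Mb \<le> deriv (F x) y" if "\<bar>y - ginv (F x) (\<alpha>/2)\<bar> < \<delta>" for x y
    using that by (intro slope) simp
  have slope_upper: "1/Mb \<le> deriv (F x) y" if "\<bar>y - ginv (F x) (1 - \<alpha>/2)\<bar> < \<delta>" for x y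
    using that by (intro slope) simp
  obtain B1 where B1: "\<And>n. B1 n \<in> events" "(\<lambda>n. prob (B1 n)) \<longlonglongrightarrow> 0"
    "eventually (\<lambda>n. \<forall>\<omega>\<in>space M - B1 n.
       \<bar>conf_endpoint n \<omega> (\<alpha>/2) - oracle_endpoint n \<omega> (\<alpha>/2)\<bar> \<le> \<epsilon>/3) sequentially"
    by (rule endpoint_consistent[OF _ _ \<open>0 < \<epsilon>/3\<close> \<open>0 < Mb\<close> \<open>0 < \<delta>\<close> \<eta> \<rho> tail diff slope_lower])
      (use \<alpha> in auto)
  obtain B2 where B2: "\<And>n. B2 n \<in> events" "(\<lambda>n. prob (B2 n)) \<longlonglongrightarrow> 0"
    "eventually (\<lambda>n. \<forall>\<omega>\<in>space M - B2 n.
       \<bar>conf_endpoint n \<omega> (1 - \<alpha>/2) - oracle_endpoint n \<omega> (1 - \<alpha>/2)\<bar> \<le> \<epsilon>/3) sequentially"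
    by (rule endpoint_consistent[OF _ _ \<open>0 < \<epsilon>/3\<close> \<open>0 < Mb\<close> \<open>0 < \<delta>\<close> \<eta> \<rho> tail diff slope_upper])
      (use \<alpha> in auto)
  show "(\<lambda>n. prob (?A \<epsilon> n)) \<longlonglongrightarrow> 0"
  proof (rule prob_tendsto_zero_if_covered)
    show "B1 n \<union> B2 n \<in> events" for n using B1(1) B2(1) by blast
    show "(\<lambda>n. prob (B1 n \<union> B2 n)) \<longlonglongrightarrow> 0"
      using B1(1) B2(1) B1(2) B2(2) by (rule prob_Un_tendsto_zero)
    show "eventually (\<lambda>n. ?A \<epsilon> n \<subseteq> B1 n \<union> B2 n) sequentially"
      using B1(3) B2(3)
    proof eventually_elim
      case (elim n)
      have short: "measure lborel (symdiff
          {conf_endpoint n \<omega> (\<alpha>/2)..conf_endpoint n \<omega> (1 - \<alpha>/2)}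
          {oracle_endpoint n \<omega> (\<alpha>/2)..oracle_endpoint n \<omega> (1 - \<alpha>/2)}) \<le> \<epsilon>/3 + \<epsilon>/3"
        if "\<omega> \<in> space M" "\<omega> \<notin> B1 n \<union> B2 n" for \<omega>
        using elim that by (intro order.trans[OF measure_symdiff_Icc_le] add_mono) auto
      show ?case
      proof
        fix \<omega> assume "\<omega> \<in> ?A \<epsilon> n"
        then show "\<omega> \<in> B1 n \<union> B2 n"
          using short[of \<omega>] \<open>0 < \<epsilon>\<close> by (cases "\<omega> \<in> B1 n \<union> B2 n") auto
      qed
    qed
  qed
qed

end

theorem theorem2:
  fixes M :: "'m measure" and Mx :: "'a measure"
    and Z :: "nat + nat \<Rightarrow> 'm \<Rightarrow> 'a \<times> real"
    and F :: "'a \<Rightarrow> real \<Rightarrow> real"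
    and est :: "nat \<Rightarrow> (nat \<Rightarrow> 'a \<times> real) \<Rightarrow> 'a \<Rightarrow> real \<Rightarrow> real"
    and \<alpha> :: real and \<eta> \<rho> :: "nat \<Rightarrow> real" and Mb :: real
  assumes "prob_space M"
    and indep: "prob_space.indep_vars M (\<lambda>_. Mx \<Otimes>\<^sub>M borel) Z UNIV"
    and ident: "\<forall>k. distr M (Mx \<Otimes>\<^sub>M borel) (Z k) = distr M (Mx \<Otimes>\<^sub>M borel) (Z (Inl 0))"
    and condF: "cond_cdf (distr M (Mx \<Otimes>\<^sub>M borel) (Z (Inl 0))) Mx F"
    and est_meas: "\<forall>n. (\<lambda>(d, x, y). est n d x y)
         \<in> borel_measurable (PiM {1..n} (\<lambda>_. Mx \<Otimes>\<^sub>M borel) \<Otimes>\<^sub>M Mx \<Otimes>\<^sub>M borel)"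
    and est_cdf: "\<forall>n. \<forall>d\<in>space (PiM {1..n} (\<lambda>_. Mx \<Otimes>\<^sub>M borel)). \<forall>x. is_cdf (est n d x)"
    and alpha: "0 < \<alpha>" "\<alpha> < 1"
    and A1: "\<eta> \<longlonglongrightarrow> 0" "\<rho> \<longlonglongrightarrow> 0"
      "\<forall>n. measure M {\<omega>\<in>space M. \<eta> n \<le>
          (\<integral>x. (SUP y. (est n (\<lambda>i\<in>{1..n}. Z (Inr i) \<omega>) x y - F x y)\<^sup>2)
             \<partial>(distr M Mx (\<lambda>\<omega>. fst (Z (Inl 0) \<omega>))))} \<le> \<rho> n"
    and A2: "\<forall>x y. F x differentiable at y" "0 < Mb"
      "\<exists>\<delta>>0. \<forall>x y. (\<bar>y - ginv (F x) (\<alpha>/2)\<bar> < \<delta> \<or> \<bar>y - ginv (F x) (1 - \<alpha>/2)\<bar> < \<delta>)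
                    \<longrightarrow> 1 / Mb \<le> deriv (F x) y"
  shows "\<forall>\<epsilon>>0. (\<lambda>n. measure M {\<omega>\<in>space M. \<epsilon> <
     measure lborel (symdiff
       {ginv (est n (\<lambda>i\<in>{1..n}. Z (Inr i) \<omega>) (fst (Z (Inl (n+1)) \<omega>)))
              (emp_quantile (\<alpha>/2) {1..n}
                 (\<lambda>i. est n (\<lambda>i\<in>{1..n}. Z (Inr i) \<omega>) (fst (Z (Inl i) \<omega>)) (snd (Z (Inl i) \<omega>))))
        ..
        ginv (est n (\<lambda>i\<in>{1..n}. Z (Inr i) \<omega>) (fst (Z (Inl (n+1)) \<omega>)))
              (emp_quantile (1 - \<alpha>/2) {1..n}
                 (\<lambda>i. est n (\<lambda>i\<in>{1..n}. Z (Inr i) \<omega>) (fst (Z (Inl i) \<omega>)) (snd (Z (Inl i) \<omega>))))}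
       {ginv (F (fst (Z (Inl (n+1)) \<omega>))) (\<alpha>/2) .. ginv (F (fst (Z (Inl (n+1)) \<omega>))) (1 - \<alpha>/2)})})
     \<longlonglongrightarrow> 0"
proof -
  have "iid_split_sample M Mx Z F est"
    unfolding iid_split_sample_def iid_split_sample_axioms_def
    using assms(1) indep ident condF est_meas est_cdf A2(1) differentiable_imp_continuous_within
    by blast
  then interpret iid_split_sample M Mx Z F est .
  obtain \<delta> where "0 < \<delta>" and slope: "\<And>x y. \<bar>y - ginv (F x) (\<alpha>/2)\<bar> < \<delta> \<or> \<bar>y - ginv (F x) (1 - \<alpha>/2)\<bar> < \<delta>
      \<Longrightarrow> 1/Mb \<le> deriv (F x) y"
    using A2(3) by blast
  have tail: "prob {\<omega>\<in>space M. \<eta> n \<le> (\<integral>x. est_error n (train n \<omega>) x \<partial>PX)} \<le> \<rho> n" for n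
    using A1(3) by (simp add: est_error_def sup_sq_diff_def train_def PX_def X_def[abs_def])
  show ?thesis
    using interval_consistent[OF alpha A2(2) \<open>0 < \<delta>\<close> A1(1,2) tail A2(1)[rule_format] slope]
    by (simp add: conf_endpoint_def oracle_endpoint_def score_def[abs_def] train_def X_def Y_def)
qed

end
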